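(* Let $\mu_1,\dots,\mu_{n_{\mathcal Q}}\in[-1,1]$ be distinct quadrature nodes including $\mu=0$, and let $\mathbf m_1(\mu)=(\mu,\mu^2,\dots,\mu^N)^T$. Let $A_\pm,b_\pm$ be half-space representations $$\operatorname{co}\{\mathbf m_1(\mu_i)\}_{\mu_i\ge0}=\{\mathbf u_{1+}:A_+\mathbf u_{1+}\le b_+\},\qquad \operatorname{co}\{\mathbf m_1(\mu_i)\}_{\mu_i\le0}=\{\mathbf u_{1-}:A_-\mathbf u_{1-}\le b_-\},$$ with rows $\mathbf a_{\pm i}^T$ of $A_\pm$, and assume $b_\pm\ge0$ componentwise. Then the closure of the normalized numerically realizable set for the mixed-moment basis, $$\overline{\mathcal R}^{\mathrm{mix}}|_{u_0=1}:=\operatorname{co}\Big(\{(\mathbf m_1(\mu_i),0):\mu_i\ge0\}\cup\{(0,\mathbf m_1(\mu_i)):\mu_i\le0\}\Big)\subset\mathbb R^{2N},$$ equals $\{\mathbf u_1=(\mathbf u_{1+},\mathbf u_{1-}):A\mathbf u_1\le b\}$, where the inequalities are: $A_+\mathbf u_{1+}\le b_+$; $A_-\mathbf u_{1-}\le b_-$; and, for every pair $(i,j)$ with $b_{+i}\neq0$ and $b_{-j}\neq0$, $b_{+i}^{-1}\mathbf a_{+i}^T\mathbf u_{1+}+b_{-j}^{-1}\mathbf a_{-j}^T\mathbf u_{1-}\le1$.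
   Context: The mixed-moment basis is $(1,\mu_+,\mu_-,\dots,\mu_+^N,\mu_-^N)^T$ with $\mu_+=\max(\mu,0)$, $\mu_-=\min(\mu,0)$; after dropping the constant component and ordering the remaining components as $(\mathbf u_{1+},\mathbf u_{1-})$ (positive-half moments, then negative-half moments), the basis evaluated at a node $\mu_i\ge0$ is $(\mathbf m_1(\mu_i),0)$ and at $\mu_i\le0$ is $(0,\mathbf m_1(\mu_i))$. $\operatorname{co}$ denotes convex hull; vector inequalities are componentwise. *)

theory Defs
  imports "HOL-Analysis.Analysis"
begin

text \<open>Moment vector m_1(mu) = (mu, mu^2, ..., mu^N) in R^N, where R^N is modelled as
  real^'n with N = CARD('n), and the coordinate k carries the exponent e k, e being a
  bijection from the index type onto {1..N}.\<close>
definition m1 :: "('n::finite \<Rightarrow> nat) \<Rightarrow> real \<Rightarrow> real ^ 'n" where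
  "m1 e \<mu> = (\<chi> k. \<mu> ^ e k)"

end

theory Submission
  imports Defs
begin

text \<open>Since \<open>b\<^sub>\<plusminus> \<ge> 0\<close>, each half-range polytope \<open>P\<^sub>\<plusminus>\<close> contains the origin, and on
  \<open>P\<^sub>\<plusminus>\<close> the function \<open>g(u) = max (0, max\<^sub>i a\<^sub>i\<^sup>T u / b\<^sub>i)\<close> (over \<open>b\<^sub>i \<noteq> 0\<close>) is the
  Minkowski gauge: \<open>u \<in> \<alpha> P\<close> iff \<open>g(u) \<le> \<alpha>\<close> for \<open>0 \<le> \<alpha> \<le> 1\<close>; the inequalities with
  \<open>b\<^sub>i = 0\<close> are harmless because a bounded polytope has trivial recession cone.
  The convex hull of \<open>P\<^sub>+ \<times> {0} \<union> {0} \<times> P\<^sub>-\<close> consists of the points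
  \<open>(\<alpha> x, (1 - \<alpha>) y)\<close>, i.e.\ of the \<open>(u\<^sub>+, u\<^sub>-)\<close> with \<open>g\<^sub>+(u\<^sub>+) + g\<^sub>-(u\<^sub>-) \<le> 1\<close>,
  and this single inequality unfolds into the pairwise cross inequalities.\<close>

definition hpolyhedron :: "(nat \<Rightarrow> 'a::real_inner) \<Rightarrow> (nat \<Rightarrow> real) \<Rightarrow> nat \<Rightarrow> 'a set" where
  "hpolyhedron a b M = {u. \<forall>i<M. a i \<bullet> u \<le> b i}"

definition hgauge :: "(nat \<Rightarrow> 'a::real_inner) \<Rightarrow> (nat \<Rightarrow> real) \<Rightarrow> nat \<Rightarrow> 'a \<Rightarrow> real" where
  "hgauge a b M u = Max (insert 0 {a i \<bullet> u / b i | i. i < M \<and> b i \<noteq> 0})"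

lemma mem_hpolyhedron_iff: "u \<in> hpolyhedron a b M \<longleftrightarrow> (\<forall>i<M. a i \<bullet> u \<le> b i)"
  by (simp add: hpolyhedron_def)

lemma hgauge_le_iff:
  "hgauge a b M u \<le> c \<longleftrightarrow> 0 \<le> c \<and> (\<forall>i<M. b i \<noteq> 0 \<longrightarrow> a i \<bullet> u / b i \<le> c)"
  by (auto simp: hgauge_def)

lemma hgauge_nonneg: "0 \<le> hgauge a b M u"
  using hgauge_le_iff by blast

lemma ratio_le_hgauge: "i < M \<Longrightarrow> b i \<noteq> 0 \<Longrightarrow> a i \<bullet> u / b i \<le> hgauge a b M u"
  using hgauge_le_iff by blast

lemma hgauge_le_one:
  assumes "\<forall>i<M. 0 \<le> b i" and "u \<in> hpolyhedron a b M"
  shows "hgauge a b M u \<le> 1"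
  using assms by (force simp: hgauge_le_iff hpolyhedron_def)

lemma inner_le_hgauge_mult:
  assumes "\<forall>i<M. 0 \<le> b i" and "u \<in> hpolyhedron a b M" and "i < M"
  shows "a i \<bullet> u \<le> hgauge a b M u * b i"
proof (cases "b i = 0")
  case True
  moreover have "a i \<bullet> u \<le> b i" using assms by (simp add: hpolyhedron_def)
  ultimately show ?thesis by simp
next
  case False
  then have "b i > 0" using assms by force
  then show ?thesis using ratio_le_hgauge[of i M b a u] \<open>i < M\<close> False by (simp add: divide_le_eq)
qed

lemma bounded_hpolyhedron_recession_cone:
  assumes "bounded (hpolyhedron a b M)" and "\<forall>i<M. 0 \<le> b i" and "\<forall>i<M. a i \<bullet> u \<le> 0"
  shows "u = 0"
proof (rule ccontr)
  assume "u \<noteq> 0"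
  obtain B where B: "\<forall>x\<in>hpolyhedron a b M. norm x \<le> B"
    using assms(1) bounded_iff by blast
  have ray: "t *\<^sub>R u \<in> hpolyhedron a b M" if "t \<ge> 0" for t
    using assms(2,3) that by (force simp: hpolyhedron_def intro: order_trans[OF mult_nonneg_nonpos])
  define t where "t = (\<bar>B\<bar> + 1) / norm u"
  have "norm (t *\<^sub>R u) \<le> B"
    by (rule B[rule_format, OF ray]) (simp add: t_def)
  moreover have "norm (t *\<^sub>R u) = \<bar>B\<bar> + 1"
    using \<open>u \<noteq> 0\<close> by (simp add: t_def)
  ultimately show False by simp
qed

lemma scaleR_mem_hpolyhedron:
  assumes "\<forall>i<M. 0 \<le> b i" and "x \<in> hpolyhedron a b M" and "0 \<le> \<alpha>" "\<alpha> \<le> 1"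
  shows "\<alpha> *\<^sub>R x \<in> hpolyhedron a b M" and "hgauge a b M (\<alpha> *\<^sub>R x) \<le> \<alpha>"
proof -
  have "a i \<bullet> (\<alpha> *\<^sub>R x) \<le> \<alpha> * b i" if "i < M" for i
    using assms that by (simp add: hpolyhedron_def mult_left_mono)
  moreover have "\<alpha> * b i \<le> b i" if "i < M" for i
    using assms that by (simp add: mult_left_le_one_le)
  ultimately show "\<alpha> *\<^sub>R x \<in> hpolyhedron a b M"
    unfolding hpolyhedron_def by (blast intro: order_trans)
  have "a i \<bullet> (\<alpha> *\<^sub>R x) / b i \<le> \<alpha>" if "i < M" "b i \<noteq> 0" for i
  proof -
    have "a i \<bullet> x / b i \<le> 1"
      using hgauge_le_one[OF assms(1,2)] ratio_le_hgauge[of i M b a x] that by linarith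
    then show ?thesis
      using \<open>0 \<le> \<alpha>\<close> mult_left_mono[of "a i \<bullet> x / b i" 1 \<alpha>] by simp
  qed
  then show "hgauge a b M (\<alpha> *\<^sub>R x) \<le> \<alpha>"
    using \<open>0 \<le> \<alpha>\<close> by (simp add: hgauge_le_iff)
qed

lemma hgauge_le_imp_mem_scaled_hpolyhedron:
  assumes "bounded (hpolyhedron a b M)" and "hpolyhedron a b M \<noteq> {}" and "\<forall>i<M. 0 \<le> b i"
    and "u \<in> hpolyhedron a b M" and "hgauge a b M u \<le> \<alpha>"
  shows "u \<in> (*\<^sub>R) \<alpha> ` hpolyhedron a b M"
proof -
  have scaled: "a i \<bullet> u \<le> \<alpha> * b i" if "i < M" for i
    using inner_le_hgauge_mult[OF assms(3,4) that] assms(3,5) that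
    by (meson mult_right_mono order_trans)
  show ?thesis
  proof (cases "\<alpha> = 0")
    case True
    then have "u = 0"
      using bounded_hpolyhedron_recession_cone[OF assms(1,3)] scaled by simp
    with True assms(2) show ?thesis by auto
  next
    case False
    then have "\<alpha> > 0"
      using assms(5) hgauge_nonneg[of a b M u] by linarith
    then have "inverse \<alpha> *\<^sub>R u \<in> hpolyhedron a b M"
      using scaled by (simp add: hpolyhedron_def field_simps)
    moreover have "u = \<alpha> *\<^sub>R (inverse \<alpha> *\<^sub>R u)"
      using \<open>\<alpha> > 0\<close> by simp
    ultimately show ?thesis by blast
  qed
qed

lemma convex_hull_Un_axis_images:
  fixes X :: "'a::euclidean_space set" and Y :: "'b::euclidean_space set"
  assumes "X \<noteq> {}" and "Y \<noteq> {}"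
  shows "convex hull ((\<lambda>x. (x, 0)) ` X \<union> (\<lambda>y. (0, y)) ` Y) =
    {(\<alpha> *\<^sub>R x, (1 - \<alpha>) *\<^sub>R y) | \<alpha> x y. 0 \<le> \<alpha> \<and> \<alpha> \<le> 1 \<and> x \<in> convex hull X \<and> y \<in> convex hull Y}"
    (is "_ = ?rhs")
proof -
  have lin: "linear (\<lambda>x::'a. (x, 0::'b))" "linear (\<lambda>y::'b. (0::'a, y))"
    by (simp_all add: linear_iff)
  have "convex hull (S \<union> T) = convex hull (convex hull S \<union> convex hull T)" for S T :: "('a \<times> 'b) set"
    by (rule hull_Un) (simp add: convex_Inter)
  then have "convex hull ((\<lambda>x. (x, 0)) ` X \<union> (\<lambda>y. (0, y)) ` Y) =
      convex hull ((\<lambda>x. (x, 0)) ` (convex hull X) \<union> (\<lambda>y. (0, y)) ` (convex hull Y))"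
    by (simp only: convex_hull_linear_image[OF lin(1)] convex_hull_linear_image[OF lin(2)])
  also have "\<dots> = {u *\<^sub>R s + v *\<^sub>R t | u v s t. u \<ge> 0 \<and> v \<ge> 0 \<and> u + v = 1 \<and>
      s \<in> (\<lambda>x. (x, 0)) ` (convex hull X) \<and> t \<in> (\<lambda>y. (0, y)) ` (convex hull Y)}"
    (is "_ = ?mix")
    using assms by (intro convex_hull_union_two convex_linear_image lin) auto
  also have "?mix = ?rhs"
  proof (intro equalityI subsetI)
    fix z assume "z \<in> ?mix"
    then obtain u x y where "0 \<le> u" "u \<le> 1" "x \<in> convex hull X" "y \<in> convex hull Y"
      and "z = (u *\<^sub>R x, (1 - u) *\<^sub>R y)"
      by (auto simp: eq_diff_eq')
    then show "z \<in> ?rhs" by blast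
  next
    fix z assume "z \<in> ?rhs"
    then obtain \<alpha> x y where "0 \<le> \<alpha>" "\<alpha> \<le> 1" "x \<in> convex hull X" "y \<in> convex hull Y"
      and "z = \<alpha> *\<^sub>R (x, 0) + (1 - \<alpha>) *\<^sub>R (0, y)"
      by auto
    then show "z \<in> ?mix" by fastforce
  qed
  finally show ?thesis .
qed

lemma pairwise_ratio_sum_le_one_iff:
  assumes "\<forall>i<M. 0 \<le> b i" and "\<forall>j<N. 0 \<le> d j"
    and "u \<in> hpolyhedron a b M" and "v \<in> hpolyhedron c d N"
  shows "(\<forall>i<M. \<forall>j<N. b i \<noteq> 0 \<longrightarrow> d j \<noteq> 0 \<longrightarrow> a i \<bullet> u / b i + c j \<bullet> v / d j \<le> 1)
    \<longleftrightarrow> hgauge a b M u + hgauge c d N v \<le> 1"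
proof
  assume pairs: "\<forall>i<M. \<forall>j<N. b i \<noteq> 0 \<longrightarrow> d j \<noteq> 0 \<longrightarrow> a i \<bullet> u / b i + c j \<bullet> v / d j \<le> 1"
  have "a i \<bullet> u / b i \<le> 1 - hgauge c d N v" if "i < M" "b i \<noteq> 0" for i
  proof -
    have "c j \<bullet> v / d j \<le> 1 - a i \<bullet> u / b i" if "j < N" "d j \<noteq> 0" for j
      using pairs \<open>i < M\<close> \<open>b i \<noteq> 0\<close> that by fastforce
    moreover have "a i \<bullet> u / b i \<le> 1"
      using that ratio_le_hgauge[of i M b a u] hgauge_le_one[OF assms(1,3)] by linarith
    ultimately have "hgauge c d N v \<le> 1 - a i \<bullet> u / b i"
      by (simp add: hgauge_le_iff)
    then show ?thesis by simp
  qed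
  then have "hgauge a b M u \<le> 1 - hgauge c d N v"
    using hgauge_le_one[OF assms(2,4)] by (simp add: hgauge_le_iff)
  then show "hgauge a b M u + hgauge c d N v \<le> 1" by simp
next
  assume "hgauge a b M u + hgauge c d N v \<le> 1"
  then show "\<forall>i<M. \<forall>j<N. b i \<noteq> 0 \<longrightarrow> d j \<noteq> 0 \<longrightarrow> a i \<bullet> u / b i + c j \<bullet> v / d j \<le> 1"
    using ratio_le_hgauge[of _ M b a u] ratio_le_hgauge[of _ N d c v] by (smt (verit))
qed

lemma hgauge_sum_le_one_iff_scaled:
  assumes "bounded (hpolyhedron a b M)" "hpolyhedron a b M \<noteq> {}" "\<forall>i<M. 0 \<le> b i"
    and "bounded (hpolyhedron c d N)" "hpolyhedron c d N \<noteq> {}" "\<forall>j<N. 0 \<le> d j"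
  shows "u \<in> hpolyhedron a b M \<and> v \<in> hpolyhedron c d N \<and> hgauge a b M u + hgauge c d N v \<le> 1
    \<longleftrightarrow> (\<exists>\<alpha> x y. 0 \<le> \<alpha> \<and> \<alpha> \<le> 1 \<and> x \<in> hpolyhedron a b M \<and> y \<in> hpolyhedron c d N \<and>
          u = \<alpha> *\<^sub>R x \<and> v = (1 - \<alpha>) *\<^sub>R y)"
proof
  assume "u \<in> hpolyhedron a b M \<and> v \<in> hpolyhedron c d N \<and> hgauge a b M u + hgauge c d N v \<le> 1"
  then have u: "u \<in> hpolyhedron a b M" and v: "v \<in> hpolyhedron c d N"
    and "hgauge c d N v \<le> 1 - hgauge a b M u" by auto
  obtain x where "x \<in> hpolyhedron a b M" "u = hgauge a b M u *\<^sub>R x"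
    using hgauge_le_imp_mem_scaled_hpolyhedron[OF assms(1-3) u order_refl] by blast
  moreover obtain y where "y \<in> hpolyhedron c d N" "v = (1 - hgauge a b M u) *\<^sub>R y"
    using hgauge_le_imp_mem_scaled_hpolyhedron[OF assms(4-6) v \<open>hgauge c d N v \<le> _\<close>] by blast
  moreover have "0 \<le> hgauge a b M u" "hgauge a b M u \<le> 1"
    using hgauge_nonneg \<open>hgauge c d N v \<le> _\<close> hgauge_nonneg[of c d N v] by auto
  ultimately show "\<exists>\<alpha> x y. 0 \<le> \<alpha> \<and> \<alpha> \<le> 1 \<and> x \<in> hpolyhedron a b M \<and> y \<in> hpolyhedron c d N \<and>
          u = \<alpha> *\<^sub>R x \<and> v = (1 - \<alpha>) *\<^sub>R y" by blast
next
  assume "\<exists>\<alpha> x y. 0 \<le> \<alpha> \<and> \<alpha> \<le> 1 \<and> x \<in> hpolyhedron a b M \<and> y \<in> hpolyhedron c d N \<and>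
          u = \<alpha> *\<^sub>R x \<and> v = (1 - \<alpha>) *\<^sub>R y"
  then obtain \<alpha> x y where "0 \<le> \<alpha>" "\<alpha> \<le> 1" "x \<in> hpolyhedron a b M" "y \<in> hpolyhedron c d N"
    and "u = \<alpha> *\<^sub>R x" "v = (1 - \<alpha>) *\<^sub>R y" by blast
  with scaleR_mem_hpolyhedron[OF assms(3)] scaleR_mem_hpolyhedron[OF assms(6)]
  show "u \<in> hpolyhedron a b M \<and> v \<in> hpolyhedron c d N \<and> hgauge a b M u + hgauge c d N v \<le> 1"
    by (smt (verit))
qed

theorem mainTheorem6:
  fixes Q :: "real set" and e :: "'n::finite \<Rightarrow> nat"
    and Mp Mm :: nat
    and ap am :: "nat \<Rightarrow> real ^ 'n" and bp bm :: "nat \<Rightarrow> real"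
  assumes e_bij: "bij_betw e UNIV {1..CARD('n)}"
    and Q_fin: "finite Q" and Q_range: "Q \<subseteq> {-1..1}" and Q_zero: "0 \<in> Q"
    and hrep_p: "convex hull (m1 e ` {\<mu>\<in>Q. \<mu> \<ge> 0}) = {u. \<forall>i<Mp. ap i \<bullet> u \<le> bp i}"
    and hrep_m: "convex hull (m1 e ` {\<mu>\<in>Q. \<mu> \<le> 0}) = {u. \<forall>j<Mm. am j \<bullet> u \<le> bm j}"
    and bp_nonneg: "\<forall>i<Mp. bp i \<ge> 0"
    and bm_nonneg: "\<forall>j<Mm. bm j \<ge> 0"
  shows "convex hull ((\<lambda>\<mu>. (m1 e \<mu>, 0)) ` {\<mu>\<in>Q. \<mu> \<ge> 0} \<union> (\<lambda>\<mu>. (0, m1 e \<mu>)) ` {\<mu>\<in>Q. \<mu> \<le> 0})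
       = {(up, um). (\<forall>i<Mp. ap i \<bullet> up \<le> bp i) \<and> (\<forall>j<Mm. am j \<bullet> um \<le> bm j) \<and>
            (\<forall>i<Mp. \<forall>j<Mm. bp i \<noteq> 0 \<longrightarrow> bm j \<noteq> 0 \<longrightarrow>
               (ap i \<bullet> up) / bp i + (am j \<bullet> um) / bm j \<le> 1)}"
proof -
  define Sp where "Sp = m1 e ` {\<mu>\<in>Q. \<mu> \<ge> 0}"
  define Sm where "Sm = m1 e ` {\<mu>\<in>Q. \<mu> \<le> 0}"
  have hull_Sp: "convex hull Sp = hpolyhedron ap bp Mp" and hull_Sm: "convex hull Sm = hpolyhedron am bm Mm"
    using hrep_p hrep_m by (simp_all add: Sp_def Sm_def hpolyhedron_def)
  have nonempty: "Sp \<noteq> {}" "Sm \<noteq> {}"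
    using Q_zero by (auto simp: Sp_def Sm_def)
  have "bounded (convex hull Sp)" "bounded (convex hull Sm)"
    using Q_fin by (simp_all add: Sp_def Sm_def compact_imp_bounded finite_imp_compact_convex_hull)
  with nonempty have polytopes: "bounded (hpolyhedron ap bp Mp)" "hpolyhedron ap bp Mp \<noteq> {}"
      "bounded (hpolyhedron am bm Mm)" "hpolyhedron am bm Mm \<noteq> {}"
    by (simp_all flip: hull_Sp hull_Sm)
  have "convex hull ((\<lambda>\<mu>. (m1 e \<mu>, 0)) ` {\<mu>\<in>Q. \<mu> \<ge> 0} \<union> (\<lambda>\<mu>. (0, m1 e \<mu>)) ` {\<mu>\<in>Q. \<mu> \<le> 0})
      = convex hull ((\<lambda>x. (x, 0)) ` Sp \<union> (\<lambda>y. (0, y)) ` Sm)"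
    by (simp add: Sp_def Sm_def image_image)
  also have "\<dots> = {(\<alpha> *\<^sub>R x, (1 - \<alpha>) *\<^sub>R y) | \<alpha> x y. 0 \<le> \<alpha> \<and> \<alpha> \<le> 1 \<and>
      x \<in> hpolyhedron ap bp Mp \<and> y \<in> hpolyhedron am bm Mm}"
    using convex_hull_Un_axis_images[OF nonempty] by (simp add: hull_Sp hull_Sm)
  also have "\<dots> = {(up, um). up \<in> hpolyhedron ap bp Mp \<and> um \<in> hpolyhedron am bm Mm \<and>
      hgauge ap bp Mp up + hgauge am bm Mm um \<le> 1}"
    using hgauge_sum_le_one_iff_scaled[OF polytopes(1,2) bp_nonneg polytopes(3,4) bm_nonneg]
    by blast
  also have "\<dots> = {(up, um). up \<in> hpolyhedron ap bp Mp \<and> um \<in> hpolyhedron am bm Mm \<and>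
      (\<forall>i<Mp. \<forall>j<Mm. bp i \<noteq> 0 \<longrightarrow> bm j \<noteq> 0 \<longrightarrow> ap i \<bullet> up / bp i + am j \<bullet> um / bm j \<le> 1)}"
    using pairwise_ratio_sum_le_one_iff[OF bp_nonneg bm_nonneg] by blast
  finally show ?thesis
    by (simp add: mem_hpolyhedron_iff)
qed

end
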